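(* Let $(X,* )$ be an associative shelf. For $n\ge 0$ let $C_n=\mathbb{Z}X^{n+1}$ (the free abelian group on $X^{n+1}$), and for $0\le i\le n$ define homomorphisms $d_i:C_n\to C_{n-1}$ on basis elements by $$d_i(x_0,\dots,x_n)=\begin{cases}(x_0*x_1,x_2,\dots,x_{n-1},x_n*x_0) & i=0,\\ (x_n*x_0,x_1,\dots,x_{n-2},x_{n-1}*x_n) & i=n,\\ (x_0,\dots,x_{i-2},x_{i-1}*x_i,x_i*x_{i+1},x_{i+2},\dots,x_n) & 0<i<n.\end{cases}$$ (For $n=1$ this means $d_0(x_0,x_1)=x_0*x_1*x_0$ and $d_1(x_0,x_1)=x_1*x_0*x_1$ in $C_0=\mathbb{Z}X$.) Then $(C_n,d_i)$ is a pre-simplicial module, i.e. $d_i\circ d_j=d_{j-1}\circ d_i$ on $C_{n+1}$ for all $0\le i<j\le n+1$.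
   Context: A shelf is a set $X$ with a binary operation $*$ satisfying right self-distributivity $(a*b)*c=(a*c)*(b*c)$ for all $a,b,c\in X$. An associative shelf is a shelf whose operation is also associative (so products may be written without parentheses). *)

theory Defs
  imports "HOL-Library.Poly_Mapping"
begin

definition shelf :: "('a \<Rightarrow> 'a \<Rightarrow> 'a) \<Rightarrow> bool" where
  "shelf f \<longleftrightarrow> (\<forall>a b c. f (f a b) c = f (f a c) (f b c))"

definition associative_shelf :: "('a \<Rightarrow> 'a \<Rightarrow> 'a) \<Rightarrow> bool" where
  "associative_shelf f \<longleftrightarrow> shelf f \<and> (\<forall>a b c. f (f a b) c = f a (f b c))"

definition chains :: "nat \<Rightarrow> ('a list \<Rightarrow>\<^sub>0 int) set" where
  "chains n = {c. Poly_Mapping.keys c \<subseteq> {xs. length xs = n + 1}}"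

definition lin_ext :: "('a \<Rightarrow> 'b) \<Rightarrow> ('a \<Rightarrow>\<^sub>0 int) \<Rightarrow> ('b \<Rightarrow>\<^sub>0 int)" where
  "lin_ext g c = (\<Sum>x\<in>Poly_Mapping.keys c. Poly_Mapping.single (g x) (Poly_Mapping.lookup c x))"

definition face :: "('a \<Rightarrow> 'a \<Rightarrow> 'a) \<Rightarrow> nat \<Rightarrow> nat \<Rightarrow> 'a list \<Rightarrow> 'a list" where
  "face f n i xs =
    (if n = 1 then
       (if i = 0 then [f (f (xs!0) (xs!1)) (xs!0)] else [f (f (xs!1) (xs!0)) (xs!1)])
     else if i = 0 then
       f (xs!0) (xs!1) # take (n - 2) (drop 2 xs) @ [f (xs!n) (xs!0)]
     else if i = n then
       f (xs!n) (xs!0) # take (n - 2) (drop 1 xs) @ [f (xs!(n-1)) (xs!n)]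
     else
       take (i - 1) xs @ [f (xs!(i-1)) (xs!i), f (xs!i) (xs!(i+1))] @ drop (i + 2) xs)"

definition bdry :: "('a \<Rightarrow> 'a \<Rightarrow> 'a) \<Rightarrow> nat \<Rightarrow> nat \<Rightarrow> ('a list \<Rightarrow>\<^sub>0 int) \<Rightarrow> ('a list \<Rightarrow>\<^sub>0 int)" where
  "bdry f n i = lin_ext (face f n i)"

end

theory Submission
  imports Defs
begin

text \<open>For far-apart indices the two composites \<open>d\<^sub>i d\<^sub>j\<close> and
  \<open>d\<^sub>j\<^sub>-\<^sub>1 d\<^sub>i\<close> agree entrywise on the nose; where the faces overlap, one side produces
  \<open>a*b*c\<close> and the other \<open>a*b*b*c\<close>, and these coincide in an associative shelf because
  self-distributivity together with associativity gives \<open>a*b*b*c = a*b*c\<close>.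
  Linearity then carries the identity from basis tuples to all chains.\<close>

lemma associative_shelf_assoc:
  "associative_shelf f \<Longrightarrow> f (f a b) c = f a (f b c)"
  unfolding associative_shelf_def by blast

lemma associative_shelf_absorb:
  "associative_shelf f \<Longrightarrow> f a (f b (f b c)) = f a (f b c)"
  unfolding associative_shelf_def shelf_def by metis

lemma length_face:
  "1 \<le> n \<Longrightarrow> length xs = Suc n \<Longrightarrow> i \<le> n \<Longrightarrow> length (face f n i xs) = n"
  unfolding face_def by auto

lemma nth_face_first:
  assumes "2 \<le> n" "length xs = Suc n" "k < n"
  shows "face f n 0 xs ! k =
    (if k = 0 then f (xs!0) (xs!1) else if Suc k = n then f (xs!n) (xs!0) else xs ! Suc k)"
  using assms by (cases k) (auto simp: face_def nth_append)

lemma nth_face_last: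
  assumes "2 \<le> n" "length xs = Suc n" "k < n"
  shows "face f n n xs ! k =
    (if k = 0 then f (xs!n) (xs!0) else if Suc k = n then f (xs!k) (xs!n) else xs!k)"
  using assms by (cases k) (auto simp: face_def nth_append)

lemma nth_face_inner:
  assumes "2 \<le> n" "length xs = Suc n" "k < n" "0 < i" "i < n"
  shows "face f n i xs ! k =
    (if Suc k < i then xs!k else if Suc k = i \<or> k = i then f (xs!k) (xs ! Suc k) else xs ! Suc k)"
  using assms by (auto simp: face_def nth_append nth_Cons')

lemma face_face_commute_degree_ge2:
  assumes as: "associative_shelf f" and n: "2 \<le> n" and l: "length xs = n + 2"
    and ij: "i < j" "j \<le> n + 1"
  shows "face f n i (face f (n + 1) j xs) = face f n (j - 1) (face f (n + 1) i xs)"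
proof (rule nth_equalityI)
  have len: "length (face f (Suc n) i' xs) = Suc n" if "i' \<le> Suc n" for i'
    using length_face[of "Suc n" xs i' f] that n l by simp
  then show "length (face f n i (face f (n + 1) j xs)) = length (face f n (j - 1) (face f (n + 1) i xs))"
    using assms by (simp add: length_face)
  fix k assume "k < length (face f n i (face f (n + 1) j xs))"
  then have k: "k < n" using assms len by (simp add: length_face)
  note simps = nth_face_first nth_face_last nth_face_inner len l
    associative_shelf_assoc[OF as] associative_shelf_absorb[OF as]
  consider "i = 0" "j = 1" | "i = 0" "1 < j" "j < n + 1" | "i = 0" "j = n + 1"
    | "0 < i" "j = i + 1" "j < n + 1" | "0 < i" "i + 1 < j" "j < n + 1"
    | "0 < i" "i < n" "j = n + 1" | "i = n" "j = n + 1"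
    using ij by linarith
  then show "face f n i (face f (n + 1) j xs) ! k = face f n (j - 1) (face f (n + 1) i xs) ! k"
    by cases (use k n in \<open>auto simp: simps\<close>)
qed

lemma face_face_commute_degree1:
  assumes as: "associative_shelf f" and l: "length xs = 3" and ij: "i < j" "j \<le> 2"
  shows "face f 1 i (face f 2 j xs) = face f 1 (j - 1) (face f 2 i xs)"
proof -
  obtain a b c where xs: "xs = [a, b, c]"
    using l by (auto simp: numeral_3_eq_3 length_Suc_conv)
  have "i = 0 \<and> j = 1 \<or> i = 0 \<and> j = 2 \<or> i = 1 \<and> j = 2"
    using ij by linarith
  then show ?thesis
    using associative_shelf_assoc[OF as] associative_shelf_absorb[OF as]
    by (auto simp: xs face_def numeral_2_eq_2)
qed

lemma face_face_commute:
  assumes "associative_shelf f" and "1 \<le> n" and "length xs = n + 2"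
    and "i < j" and "j \<le> n + 1"
  shows "face f n i (face f (n + 1) j xs) = face f n (j - 1) (face f (n + 1) i xs)"
proof (cases "n = 1")
  case True
  then show ?thesis
    using face_face_commute_degree1[OF assms(1) _ assms(4)] assms(3,5)
    by (simp add: numeral_2_eq_2 numeral_3_eq_3)
next
  case False
  then show ?thesis
    using face_face_commute_degree_ge2[OF assms(1) _ assms(3-5)] assms(2) by simp
qed

lemma lin_ext_eq_frag_extend: "lin_ext g c = frag_extend (frag_of \<circ> g) c"
  unfolding lin_ext_def frag_extend_def
  by (rule sum.cong) (auto intro!: poly_mapping_eqI simp: lookup_single)

lemma lin_ext_lin_ext: "lin_ext g (lin_ext h c) = lin_ext (g \<circ> h) c"
  unfolding lin_ext_eq_frag_extend frag_extend_compose by (simp add: comp_assoc)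

lemma lin_ext_cong:
  "(\<And>x. x \<in> Poly_Mapping.keys c \<Longrightarrow> g x = h x) \<Longrightarrow> lin_ext g c = lin_ext h c"
  unfolding lin_ext_eq_frag_extend by (rule frag_extend_eq) simp

theorem proposition1p3:
  fixes f :: "'a \<Rightarrow> 'a \<Rightarrow> 'a" and n i j :: nat and c :: "'a list \<Rightarrow>\<^sub>0 int"
  assumes "associative_shelf f" and "1 \<le> n"
    and "i < j" and "j \<le> n + 1"
    and "c \<in> chains (n + 1)"
  shows "bdry f n i (bdry f (n + 1) j c) = bdry f n (j - 1) (bdry f (n + 1) i c)"
  unfolding bdry_def lin_ext_lin_ext
proof (rule lin_ext_cong)
  fix xs assume "xs \<in> Poly_Mapping.keys c"
  then have "length xs = n + 2"
    using assms(5) unfolding chains_def by auto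
  then show "(face f n i \<circ> face f (n + 1) j) xs = (face f n (j - 1) \<circ> face f (n + 1) i) xs"
    using face_face_commute[OF assms(1,2) _ assms(3,4)] by simp
qed

end
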